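(* Let $D$ and $r$ be positive integers and let $p:\mathbb N\to\mathbb C$ be a quasi-polynomial $p(n)=d_{r-1}(n)n^{r-1}+\cdots+d_1(n)n+d_0(n)$, where each $d_m:\mathbb N\to\mathbb C$ is periodic with period $D$ and $d_{r-1}$ is not identically zero. Write $\sum_{n\geq 0}p(n)z^n=L(z)/M(z)$ in lowest terms with partial fraction decomposition $$\frac{L(z)}{M(z)}=\sum_{M(\lambda)=0}\sum_{\ell=1}^{m(\lambda)}\frac{c_{\lambda,\ell}}{(\lambda-z)^{\ell}},$$ where $m(\lambda)$ is the multiplicity of $\lambda$ as a root of $M$. Let $\gamma$ be a root of $M$. Then for each $1\leq m\leq m(\gamma)$, $$ c_{\gamma,m} = \gamma^{m}(m-1)! \sum_{\ell=m}^{m(\gamma)}(-1)^{\ell-m}\left\{ {\ell \atop m}\right\}\frac{1}{D}\sum_{v=0}^{D-1} \gamma^{v}d_{\ell-1}(v).$$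
   Context: For such $p$ the generating function $\sum_{n\ge0}p(n)z^n$ is a rational function; in lowest terms $L/M$ one has $\deg L<\deg M$ and every root $\lambda$ of $M$ satisfies $\lambda^D=1$. $\left\{ {\ell \atop m}\right\}$ denotes the Stirling number of the second kind (the number of partitions of an $\ell$-element set into $m$ nonempty blocks). *)

theory Defs
  imports Complex_Main "HOL-Computational_Algebra.Computational_Algebra" "HOL-Combinatorics.Stirling"
begin

end

theory Submission
  imports Defs
begin

(*
  Multiplying the generating function by (1 - z^D)^r applies an r-th order difference with step D
  to p, which annihilates every residue class of a quasi-polynomial of degree < r.  As L/M is in
  lowest terms, the roots of M are therefore D-th roots of unity of multiplicity at most r.
  Expanding the partial fractions gives
    p(n) = sum_{lambda, l} c_{lambda,l} binom(n + l - 1, l - 1) / lambda^(n + l),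
  and on each residue class n = v + D t both sides are polynomials in n.  Comparing coefficients
  of n^k, via binom(n + j, j) j! = sum_k s(j + 1, k + 1) n^k with s the unsigned Stirling numbers
  of the first kind, expresses d_k(v) through the c_{lambda,l}.  Averaging against gamma^v over one
  period isolates the pole gamma by orthogonality of roots of unity, and the resulting triangular
  system is inverted by the Stirling numbers of the second kind.
*)

lemma sum_alternating_binomial_Suc:
  fixes f :: "nat \<Rightarrow> 'a::comm_ring_1"
  shows "(\<Sum>i\<le>Suc r. (-1)^i * of_nat (Suc r choose i) * f i)
       = (\<Sum>i\<le>r. (-1)^i * of_nat (r choose i) * (f i - f (Suc i)))"
proof -
  have "(\<Sum>i\<le>Suc r. (-1)^i * of_nat (Suc r choose i) * f i)
      = f 0 + (\<Sum>i\<le>r. (-1)^Suc i * of_nat (r choose Suc i) * f (Suc i))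
            + (\<Sum>i\<le>r. (-1)^Suc i * of_nat (r choose i) * f (Suc i))"
    by (simp only: sum.atMost_Suc_shift sum.distrib[symmetric] add.assoc) (simp add: algebra_simps)
  also have "f 0 + (\<Sum>i\<le>r. (-1)^Suc i * of_nat (r choose Suc i) * f (Suc i))
      = (\<Sum>i\<le>r. (-1)^i * of_nat (r choose i) * f i)"
  proof -
    have "(\<Sum>i\<le>r. (-1)^Suc i * of_nat (r choose Suc i) * f (Suc i))
        = (\<Sum>i<r. (-1)^Suc i * of_nat (r choose Suc i) * f (Suc i))"
      by (simp add: lessThan_Suc_atMost[symmetric] binomial_eq_0)
    then show ?thesis
      by (simp only: sum.atMost_shift[of "\<lambda>i. (-1)^i * of_nat (r choose i) * f i"]) simp
  qed
  finally show ?thesis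
    by (simp add: right_diff_distrib sum_subtractf sum_negf)
qed

lemma sum_alternating_binomial_poly_eq_0:
  fixes q :: "'a::idom poly"
  assumes "degree q < r"
  shows "(\<Sum>i\<le>r. (-1)^i * of_nat (r choose i) * poly q (of_nat i)) = 0"
  using assms
proof (induction r arbitrary: q)
  case 0
  then show ?case by simp
next
  case (Suc r)
  define \<Delta>q where "\<Delta>q = q - pcompose q [:1, 1:]"
  have "poly q (of_nat i) - poly q (of_nat (Suc i)) = poly \<Delta>q (of_nat i)" for i
    by (simp add: \<Delta>q_def poly_pcompose algebra_simps)
  then have "(\<Sum>i\<le>Suc r. (-1)^i * of_nat (Suc r choose i) * poly q (of_nat i))
      = (\<Sum>i\<le>r. (-1)^i * of_nat (r choose i) * poly \<Delta>q (of_nat i))"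
    by (simp only: sum_alternating_binomial_Suc)
  also have "\<dots> = 0"
  proof (cases "degree q = 0")
    case True
    then show ?thesis by (auto simp: \<Delta>q_def elim: degree_eq_zeroE)
  next
    case False
    have "coeff (pcompose q [:1, 1:]) (degree q) = lead_coeff q"
      using lead_coeff_comp[of "[:1, 1:]" q] by (simp add: degree_pcompose)
    then have "coeff \<Delta>q (degree q) = 0"
      by (simp add: \<Delta>q_def)
    moreover have "degree \<Delta>q \<le> degree q"
      unfolding \<Delta>q_def by (rule order.trans[OF degree_diff_le]) (auto simp: degree_pcompose)
    ultimately have "\<Delta>q = 0 \<or> degree \<Delta>q < degree q"
      using False by (metis leading_coeff_0_iff le_neq_implies_less)
    then show ?thesis
      using Suc by auto
  qed
  finally show ?case .
qed

lemma sum_Stirling_stirling: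
  assumes "j < K"
  shows "(\<Sum>l<K. (-1)^(l+m) * int (Stirling l m) * int (stirling j l)) = (if j = m then 1 else 0)"
  using assms
proof (induction j arbitrary: m)
  case 0
  have "(\<Sum>l<K. (-1)^(l+m) * int (Stirling l m) * int (stirling 0 l))
      = (\<Sum>l\<in>{0}. (-1)^(l+m) * int (Stirling l m) * int (stirling 0 l))"
    by (rule sum.mono_neutral_right) (use 0 in auto)
  then show ?case by (cases m) auto
next
  case (Suc j)
  obtain K' where K: "K = Suc K'" using Suc.prems by (cases K) auto
  define T where "T m = (\<Sum>l<K. (-1)^(l+m) * int (Stirling l m) * int (stirling j l))" for m
  have IH: "T m = (if j = m then 1 else 0)" for m
    using Suc by (simp add: T_def)
  have T_K': "(\<Sum>l<K'. (-1)^(l+m) * int (Stirling l m) * int (stirling j l)) = T m" for m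
    unfolding T_def K using Suc.prems K by (simp add: sum.lessThan_Suc)
  have T_shift: "T m = (-1)^m * int (Stirling 0 m) * int (stirling j 0)
      + (\<Sum>l<K'. (-1)^(Suc l+m) * int (Stirling (Suc l) m) * int (stirling j (Suc l)))" for m
    unfolding T_def K by (subst sum.lessThan_Suc_shift) simp
  have "(\<Sum>l<K. (-1)^(l+m) * int (Stirling l m) * int (stirling (Suc j) l))
      = int j * (\<Sum>l<K'. (-1)^(Suc l+m) * int (Stirling (Suc l) m) * int (stirling j (Suc l)))
        + (\<Sum>l<K'. (-1)^(Suc l+m) * int (Stirling (Suc l) m) * int (stirling j l))"
    unfolding K sum.lessThan_Suc_shift
    by (simp add: sum_distrib_left sum.distrib[symmetric] algebra_simps)
  also have "\<dots> = (if Suc j = m then 1 else 0)"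
  proof (cases m)
    case 0
    have "int (stirling j 0) = (if j = 0 then 1 else 0)" by (cases j) auto
    then show ?thesis using T_shift[of 0] IH[of 0] 0 by auto
  next
    case (Suc m')
    have "(\<Sum>l<K'. (-1)^(Suc l+m) * int (Stirling (Suc l) m) * int (stirling j l))
        = (\<Sum>l<K'. - (int m * ((-1)^(l+m) * int (Stirling l m) * int (stirling j l)))
                    + (-1)^(l+m') * int (Stirling l m') * int (stirling j l))"
      by (intro sum.cong) (simp_all add: Suc algebra_simps)
    also have "\<dots> = - int m * T m + T m'"
      by (simp only: sum.distrib sum_negf sum_distrib_left[symmetric] T_K' mult_minus_left)
    finally have "(\<Sum>l<K'. (-1)^(Suc l+m) * int (Stirling (Suc l) m) * int (stirling j l))
        = - int m * T m + T m'" .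
    moreover have "(\<Sum>l<K'. (-1)^(Suc l+m) * int (Stirling (Suc l) m) * int (stirling j (Suc l))) = T m"
      using T_shift[of m] by (simp add: Suc)
    ultimately show ?thesis
      unfolding IH using Suc by auto
  qed
  finally show ?case .
qed

lemma Stirling_inversion:
  fixes x y :: "nat \<Rightarrow> 'a::comm_ring_1"
  assumes "m \<le> N"
    and y: "\<And>l. m \<le> l \<Longrightarrow> l \<le> N \<Longrightarrow> y l = (\<Sum>j\<le>N. x j * of_nat (stirling j l))"
  shows "(\<Sum>l=m..N. (-1)^(l-m) * of_nat (Stirling l m) * y l) = x m"
proof -
  have orth: "(\<Sum>l=m..N. (-1)^(l-m) * of_nat (Stirling l m) * of_nat (stirling j l))
      = (if j = m then 1 else (0::'a))" if "j \<le> N" for j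
  proof -
    have "(\<Sum>l=m..N. (-1)^(l-m) * of_nat (Stirling l m) * of_nat (stirling j l))
        = (\<Sum>l<Suc N. (-1)^(l+m) * of_nat (Stirling l m) * of_nat (stirling j l) :: 'a)"
    proof (rule sum.mono_neutral_cong_left)
      show "(-1)^(l-m) * of_nat (Stirling l m) * of_nat (stirling j l)
          = ((-1)^(l+m) * of_nat (Stirling l m) * of_nat (stirling j l) :: 'a)" if "l \<in> {m..N}" for l
      proof -
        have "l + m = (l - m) + 2 * m" using that by simp
        then show ?thesis by (simp only: power_add power_mult) simp
      qed
    qed auto
    also have "\<dots> = of_int (\<Sum>l<Suc N. (-1)^(l+m) * int (Stirling l m) * int (stirling j l))"
      by simp
    also have "\<dots> = of_int (if j = m then 1 else 0)"
      using that by (subst sum_Stirling_stirling) simp_all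
    finally show ?thesis
      by simp
  qed
  have "(\<Sum>l=m..N. (-1)^(l-m) * of_nat (Stirling l m) * y l)
      = (\<Sum>j\<le>N. x j * (\<Sum>l=m..N. (-1)^(l-m) * of_nat (Stirling l m) * of_nat (stirling j l)))"
    by (simp add: y sum_distrib_left sum_distrib_right sum.swap[of _ "{m..N}"] mult_ac)
  also have "\<dots> = (\<Sum>j\<le>N. if j = m then x j else 0)"
    by (intro sum.cong) (simp_all add: orth)
  also have "\<dots> = x m"
    using assms(1) by simp
  finally show ?thesis .
qed

lemma poly_pochhammer: "poly (pochhammer p j) x = pochhammer (poly p x) j"
  by (induction j) (simp_all add: pochhammer_Suc)

lemma coeff_pochhammer_X:
  "coeff (pochhammer [:0, 1:] n) k = (of_nat (stirling n k) :: 'a::comm_semiring_1)"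
proof -
  have "coeff (pochhammer [:0, 1:] n) k = (\<Sum>i\<le>n. of_nat (stirling n i) * coeff ([:0, 1:] ^ i) k :: 'a)"
    by (simp add: stirling_pochhammer[symmetric] coeff_sum of_nat_poly)
  also have "\<dots> = (\<Sum>i\<le>n. if i = k then of_nat (stirling n i) else 0)"
    by (intro sum.cong) (simp_all flip: monom_altdef[of 1, simplified])
  also have "\<dots> = of_nat (stirling n k)"
    by (cases "k \<le> n") simp_all
  finally show ?thesis .
qed

lemma coeff_pochhammer_X_plus_1:
  "coeff (pochhammer [:1, 1:] j) k = (of_nat (stirling (Suc j) (Suc k)) :: 'a::comm_semiring_1)"
proof -
  have "pochhammer [:0, 1:] (Suc j) = pCons 0 (pochhammer [:1, 1:] j :: 'a poly)"
    by (simp add: pochhammer_rec one_pCons)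
  then have "coeff (pochhammer [:1, 1:] j) k = (coeff (pochhammer [:0, 1:] (Suc j)) (Suc k) :: 'a)"
    by simp
  then show ?thesis
    by (simp only: coeff_pochhammer_X)
qed

lemma poly_pochhammer_X_plus_1_of_nat:
  "poly (pochhammer [:1, 1:] j) (of_nat n) = (fact j * of_nat ((n + j) choose j) :: 'a::field_char_0)"
proof -
  have "poly (pochhammer [:1, 1:] j) (of_nat n) = (pochhammer (of_nat (n + j) - of_nat j + 1) j :: 'a)"
    by (simp add: poly_pochhammer add_ac)
  also have "\<dots> = fact j * (of_nat (n + j) gchoose j)"
    by (simp add: gbinomial_pochhammer')
  finally show ?thesis
    by (simp add: binomial_gbinomial)
qed

(* The power series of 1 / (a - z) ^ (j + 1). *)
definition pole_fps :: "'a::field \<Rightarrow> nat \<Rightarrow> 'a fps" where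
  "pole_fps a j = Abs_fps (\<lambda>n. of_nat ((n + j) choose j) / a ^ (n + j + 1))"

lemma fps_mult_const_minus_X_nth:
  fixes F :: "'a::comm_ring_1 fps"
  shows "(F * (fps_const a - fps_X)) $ n = F $ n * a - (if n = 0 then 0 else F $ (n - 1))"
proof -
  have "F * (fps_const a - fps_X) = F * fps_const a - F * fps_X"
    by (simp add: algebra_simps)
  then show ?thesis
    by (simp only: fps_sub_nth fps_mult_right_const_nth fps_X_mult_right_nth)
qed

lemma pole_fps_0_mult:
  assumes "a \<noteq> 0"
  shows "pole_fps a 0 * (fps_const a - fps_X) = 1"
proof (rule fps_ext)
  fix n
  show "(pole_fps a 0 * (fps_const a - fps_X)) $ n = 1 $ n"
    using assms by (cases n) (simp_all add: fps_mult_const_minus_X_nth pole_fps_def)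
qed

lemma pole_fps_Suc_mult:
  assumes "a \<noteq> 0"
  shows "pole_fps a (Suc j) * (fps_const a - fps_X) = pole_fps a j"
proof (rule fps_ext)
  fix n
  show "(pole_fps a (Suc j) * (fps_const a - fps_X)) $ n = pole_fps a j $ n"
  proof (cases n)
    case 0
    then show ?thesis using assms by (simp add: fps_mult_const_minus_X_nth pole_fps_def binomial_eq_0)
  next
    case (Suc n')
    have "(pole_fps a (Suc j) * (fps_const a - fps_X)) $ n
        = (of_nat (Suc (n' + Suc j) choose Suc j) - of_nat (n' + Suc j choose Suc j)) / a ^ (n' + Suc j + 1)"
      using assms
      by (simp add: fps_mult_const_minus_X_nth pole_fps_def Suc diff_divide_distrib del: binomial_Suc_Suc)
    also have "\<dots> = of_nat (n' + Suc j choose j) / a ^ (n' + Suc j + 1)"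
      by (simp only: binomial_Suc_Suc[of "n' + Suc j" j] of_nat_add add_diff_cancel_right')
    finally show ?thesis
      by (simp add: pole_fps_def Suc)
  qed
qed

lemma pole_fps_mult_power:
  assumes "a \<noteq> 0"
  shows "pole_fps a j * (fps_const a - fps_X) ^ Suc j = 1"
proof (induction j)
  case 0
  then show ?case using pole_fps_0_mult[OF assms] by simp
next
  case (Suc j)
  have "pole_fps a (Suc j) * (fps_const a - fps_X) ^ Suc (Suc j)
      = (pole_fps a (Suc j) * (fps_const a - fps_X)) * (fps_const a - fps_X) ^ Suc j"
    by (simp only: power_Suc[of _ "Suc j"] mult.assoc)
  also have "\<dots> = 1"
    unfolding pole_fps_Suc_mult[OF assms] by (rule Suc.IH)
  finally show ?case .
qed

lemma poly_eqI_infinite: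
  fixes p q :: "'a::idom poly"
  assumes "infinite S" and "\<And>z. z \<in> S \<Longrightarrow> poly p z = poly q z"
  shows "p = q"
proof (rule ccontr)
  assume "p \<noteq> q"
  then have "finite {z. poly (p - q) z = 0}"
    by (intro poly_roots_finite) simp
  moreover have "S \<subseteq> {z. poly (p - q) z = 0}"
    using assms(2) by auto
  ultimately show False
    using assms(1) finite_subset by blast
qed

lemma order_power:
  fixes q :: "'a::idom poly"
  assumes "q \<noteq> 0"
  shows "order a (q ^ n) = n * order a q"
  by (induction n) (simp_all add: order_mult assms)

lemma order_one_minus_monom_root_of_unity:
  fixes a :: "'a::field_char_0"
  assumes "D > 0" and "a ^ D = 1"
  shows "order a (1 - monom 1 D) = 1"
proof -
  have "coeff (1 - monom 1 D :: 'a poly) 0 = 1"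
    using assms(1) by simp
  then have nonzero: "1 - monom 1 D \<noteq> (0 :: 'a poly)"
    by (metis coeff_0 zero_neq_one)
  have "a \<noteq> 0"
    using assms by (metis power_0_left less_not_refl3 zero_neq_one)
  then have "poly (pderiv (1 - monom 1 D)) a \<noteq> 0"
    using assms by (simp add: pderiv_diff pderiv_monom poly_monom)
  then show ?thesis
    using order_pderiv[OF nonzero] order_0I assms(2) by (simp add: poly_monom)
qed

lemma linear_power_dvd_if_le_order:
  fixes p :: "'a::field poly"
  assumes "l \<le> order a p"
  shows "[:a, -1:] ^ l dvd p"
proof -
  have "[:-a, 1:] ^ l dvd p"
    using assms order_1 le_imp_power_dvd dvd_trans by blast
  moreover have "[:a, -1:] ^ l = smult ((-1) ^ l) ([:-a, 1:] ^ l)"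
    by (simp flip: smult_power)
  ultimately show ?thesis
    by (simp add: smult_dvd)
qed

lemma sum_power_quotient_roots_of_unity:
  fixes a b :: "'a::field"
  assumes "a ^ D = 1" and "b ^ D = 1"
  shows "(\<Sum>v<D. (b / a) ^ v) = (if a = b then of_nat D else 0)"
proof (cases "D = 0")
  case False
  then have "a \<noteq> 0"
    using assms(1) by (metis power_0_left zero_neq_one)
  moreover have "(b / a) ^ D = 1"
    using assms by (simp add: power_divide)
  ultimately show ?thesis
    using geometric_sum[of "b / a" D] by (auto simp: divide_eq_1_iff)
qed simp

lemma periodic_add_mult:
  fixes f :: "nat \<Rightarrow> 'a"
  assumes "\<And>n. f (n + D) = f n"
  shows "f (n + D * t) = f n"
proof (induction t)
  case (Suc t)
  then show ?case
    using assms[of "n + D * t"] by (simp add: ac_simps)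
qed simp

lemma one_minus_monom_power:
  "(1 - monom 1 D :: 'a::comm_ring_1 poly) ^ r = (\<Sum>i\<le>r. monom ((-1) ^ i * of_nat (r choose i)) (D * i))"
proof -
  have "(1 - monom 1 D :: 'a poly) ^ r = (monom (-1) D + 1) ^ r"
    by (simp add: minus_monom[symmetric])
  also have "\<dots> = (\<Sum>i\<le>r. monom ((-1) ^ i * of_nat (r choose i)) (D * i))"
    unfolding binomial_ring
    by (intro sum.cong refl) (simp add: monom_power of_nat_poly smult_monom mult.commute)
  finally show ?thesis .
qed

lemma quasi_polynomial_difference_eq_0:
  fixes d :: "nat \<Rightarrow> nat \<Rightarrow> 'a::idom"
  assumes periodic: "\<And>k n. k < r \<Longrightarrow> d k (n + D) = d k n"
    and p: "\<And>n. p n = (\<Sum>k<r. d k n * of_nat n ^ k)"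
    and "r * D \<le> n"
  shows "(\<Sum>i\<le>r. (-1) ^ i * of_nat (r choose i) * p (n - D * i)) = 0"
proof -
  have "p (n - D * i) = (\<Sum>k<r. d k n * poly ([:of_nat n, - of_nat D:] ^ k) (of_nat i))" if "i \<le> r" for i
  proof -
    have "D * i \<le> n"
      using that assms(3) by (metis mult.commute mult_le_mono1 order_trans)
    moreover have "d k (n - D * i) = d k n" if "k < r" for k
      using periodic_add_mult[of "d k" D "n - D * i" i] periodic[OF that] \<open>D * i \<le> n\<close> by simp
    ultimately show ?thesis
      by (simp add: p of_nat_diff poly_power algebra_simps)
  qed
  then have "(\<Sum>i\<le>r. (-1) ^ i * of_nat (r choose i) * p (n - D * i))
      = (\<Sum>k<r. d k n *
          (\<Sum>i\<le>r. (-1) ^ i * of_nat (r choose i) * poly ([:of_nat n, - of_nat D:] ^ k) (of_nat i)))"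
    by (simp add: sum_distrib_left sum.swap[of _ "{..r}"] mult_ac)
  also have "\<dots> = 0"
  proof (intro sum.neutral ballI)
    fix k assume "k \<in> {..<r}"
    moreover have "degree ([:of_nat n, - of_nat D:] ^ k :: 'a poly) \<le> k * 1"
      by (rule order.trans[OF degree_power_le]) simp
    ultimately have "degree ([:of_nat n, - of_nat D:] ^ k :: 'a poly) < r"
      by simp
    from sum_alternating_binomial_poly_eq_0[OF this]
    show "d k n * (\<Sum>i\<le>r. (-1) ^ i * of_nat (r choose i) *
        poly ([:of_nat n, - of_nat D:] ^ k) (of_nat i)) = 0"
      by (simp only: mult_zero_right)
  qed
  finally show ?thesis .
qed

lemma quasi_polynomial_fps_mult_is_poly:
  fixes d :: "nat \<Rightarrow> nat \<Rightarrow> 'a::idom"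
  assumes periodic: "\<And>k n. k < r \<Longrightarrow> d k (n + D) = d k n"
    and p: "\<And>n. p n = (\<Sum>k<r. d k n * of_nat n ^ k)"
  shows "\<exists>P. fps_of_poly ((1 - monom 1 D) ^ r) * Abs_fps p = fps_of_poly P"
proof -
  define G where "G = fps_of_poly ((1 - monom 1 D) ^ r) * Abs_fps p"
  have G_nth: "G $ n = (\<Sum>i\<le>r. (-1) ^ i * of_nat (r choose i) * (if n < D * i then 0 else p (n - D * i)))"
    for n
    by (simp add: G_def one_minus_monom_power fps_of_poly_sum fps_of_poly_monom sum_distrib_right
        fps_sum_nth mult.assoc fps_X_power_mult_nth cong: if_cong)
  have "G $ n = 0" if "r * D \<le> n" for n
  proof -
    have "\<not> n < D * i" if "i \<le> r" for i
      using that \<open>r * D \<le> n\<close> by (metis mult.commute mult_le_mono1 order_trans not_le)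
    then show ?thesis
      unfolding G_nth using quasi_polynomial_difference_eq_0[OF periodic p that] by simp
  qed
  then have "G = fps_of_poly (truncate_fps (r * D) G)"
    by (intro fps_ext) (auto simp: coeff_truncate_fps)
  then show ?thesis
    unfolding G_def by blast
qed

locale partial_fraction_expansion =
  fixes f :: "nat \<Rightarrow> 'a::field_char_0" and L M :: "'a poly" and c :: "'a \<Rightarrow> nat \<Rightarrow> 'a"
  assumes genfun: "Abs_fps f * fps_of_poly M = fps_of_poly L"
    and lowest_terms: "coprime L M"
    and partial_fractions: "\<And>z. poly M z \<noteq> 0 \<Longrightarrow>
        poly L z / poly M z = (\<Sum>a\<in>{a. poly M a = 0}. \<Sum>l=1..order a M. c a l / (a - z) ^ l)"
begin

abbreviation poles :: "'a set" where
  "poles \<equiv> {a. poly M a = 0}"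

lemma denominator_nonzero: "M \<noteq> 0"
proof
  assume "M = 0"
  then have "L = 0"
    using genfun by (simp add: fps_of_poly_eq_iff[of L 0, simplified])
  with \<open>M = 0\<close> show False
    using lowest_terms by simp
qed

lemma finite_poles: "finite poles"
  using denominator_nonzero by (rule poly_roots_finite)

lemma numerator_nonzero_at_pole: "a \<in> poles \<Longrightarrow> poly L a \<noteq> 0"
proof
  assume "a \<in> poles" and "poly L a = 0"
  then have "[:-a, 1:] dvd L" and "[:-a, 1:] dvd M"
    by (simp_all add: dvd_iff_poly_eq_0)
  then have "is_unit [:-a, 1:]"
    using lowest_terms coprime_common_divisor by blast
  then show False
    by (simp add: is_unit_pCons_iff)
qed

lemma pole_nonzero:
  assumes "a \<in> poles"
  shows "a \<noteq> 0"
proof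
  assume "a = 0"
  then have "coeff M 0 = 0"
    using assms by (simp add: poly_0_coeff_0)
  then have "poly L 0 = 0"
    using arg_cong[OF genfun, of "\<lambda>F. F $ 0"] by (simp add: poly_0_coeff_0)
  then show False
    using numerator_nonzero_at_pole assms \<open>a = 0\<close> by simp
qed

lemma order_pole_le_order:
  assumes "W \<noteq> 0" and "fps_of_poly W * Abs_fps f = fps_of_poly P" and "a \<in> poles"
  shows "order a M \<le> order a W"
proof -
  have "fps_of_poly (L * W) = fps_of_poly (M * P)"
    using assms(2) by (simp add: fps_of_poly_mult flip: genfun) (simp add: mult_ac)
  then have LW: "L * W = M * P"
    by (simp only: fps_of_poly_eq_iff)
  have "L \<noteq> 0"
    using numerator_nonzero_at_pole assms(3) by auto
  with assms(1) have "L * W \<noteq> 0"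
    by simp
  then have "order a M \<le> order a (L * W)"
    unfolding LW by (intro dvd_imp_order_le) simp_all
  also have "\<dots> = order a W"
    using \<open>L * W \<noteq> 0\<close> numerator_nonzero_at_pole assms(3) by (simp add: order_mult order_0I)
  finally show ?thesis .
qed

lemma numerator_eq_partial_fraction_sum:
  "L = (\<Sum>a\<in>poles. \<Sum>l=1..order a M. smult (c a l) (M div [:a, -1:] ^ l))"
proof (rule poly_eqI_infinite)
  show "infinite (- poles)"
    using finite_poles infinite_UNIV_char_0 by (metis Compl_eq_Diff_UNIV finite_Diff2 finite.emptyI)
next
  fix z assume "z \<in> - poles"
  then have Mz: "poly M z \<noteq> 0"
    by simp
  have "poly L z = (\<Sum>a\<in>poles. \<Sum>l=1..order a M. c a l * (poly M z / (a - z) ^ l))"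
    using partial_fractions[OF Mz] Mz by (simp add: field_simps sum_distrib_left)
  also have "\<dots> = poly (\<Sum>a\<in>poles. \<Sum>l=1..order a M. smult (c a l) (M div [:a, -1:] ^ l)) z"
    unfolding poly_sum
  proof (intro sum.cong refl)
    fix a l assume "a \<in> poles" and "l \<in> {1..order a M}"
    then have "[:a, -1:] ^ l dvd M" and "a \<noteq> z"
      using linear_power_dvd_if_le_order[of l a M] Mz by auto
    then have "poly M z = poly ([:a, -1:] ^ l * (M div [:a, -1:] ^ l)) z"
      by simp
    then have "poly M z = (a - z) ^ l * poly (M div [:a, -1:] ^ l) z"
      by (simp add: poly_power)
    with \<open>a \<noteq> z\<close> show "c a l * (poly M z / (a - z) ^ l) = poly (smult (c a l) (M div [:a, -1:] ^ l)) z"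
      by simp
  qed
  finally show "poly L z = poly (\<Sum>a\<in>poles. \<Sum>l=1..order a M. smult (c a l) (M div [:a, -1:] ^ l)) z" .
qed

lemma pole_fps_mult_denominator:
  assumes "a \<in> poles" and "1 \<le> l" and "l \<le> order a M"
  shows "pole_fps a (l - 1) * fps_of_poly M = fps_of_poly (M div [:a, -1:] ^ l)"
proof -
  have "[:a, -1:] ^ l dvd M"
    using assms(3) by (rule linear_power_dvd_if_le_order)
  then have "fps_of_poly M = fps_of_poly ([:a, -1:] ^ l) * fps_of_poly (M div [:a, -1:] ^ l)"
    by (simp flip: fps_of_poly_mult)
  also have "fps_of_poly ([:a, -1:] ^ l) = (fps_const a - fps_X) ^ Suc (l - 1)"
    using assms(2) by (simp add: fps_of_poly_power fps_of_poly_pCons fps_of_poly_const)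
  finally have "pole_fps a (l - 1) * fps_of_poly M
      = (pole_fps a (l - 1) * (fps_const a - fps_X) ^ Suc (l - 1)) * fps_of_poly (M div [:a, -1:] ^ l)"
    by (simp only: mult.assoc)
  also have "\<dots> = fps_of_poly (M div [:a, -1:] ^ l)"
    using pole_fps_mult_power[OF pole_nonzero[OF assms(1)]] by simp
  finally show ?thesis .
qed

lemma fps_eq_sum_pole_fps:
  "Abs_fps f = (\<Sum>a\<in>poles. \<Sum>l=1..order a M. fps_const (c a l) * pole_fps a (l - 1))"
    (is "_ = ?F")
proof -
  have "?F * fps_of_poly M
      = (\<Sum>a\<in>poles. \<Sum>l=1..order a M. fps_const (c a l) * (pole_fps a (l - 1) * fps_of_poly M))"
    by (simp only: sum_distrib_right mult.assoc)
  also have "\<dots> = (\<Sum>a\<in>poles. \<Sum>l=1..order a M. fps_const (c a l) * fps_of_poly (M div [:a, -1:] ^ l))"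
    by (intro sum.cong refl, subst pole_fps_mult_denominator) auto
  also have "\<dots> = fps_of_poly L"
    by (subst numerator_eq_partial_fraction_sum) (simp add: fps_of_poly_sum fps_of_poly_smult)
  finally have "Abs_fps f * fps_of_poly M = ?F * fps_of_poly M"
    using genfun by simp
  moreover have "fps_of_poly M \<noteq> 0"
    using denominator_nonzero by (metis fps_of_poly_0 fps_of_poly_eq_iff)
  ultimately show ?thesis
    by simp
qed

lemma nth_eq_partial_fraction_sum:
  "f n = (\<Sum>a\<in>poles. \<Sum>l=1..order a M. c a l * of_nat ((n + (l - 1)) choose (l - 1)) / a ^ (n + l))"
    (is "_ = ?rhs")
proof -
  have "f n = Abs_fps f $ n"
    by simp
  also have "\<dots> = ?rhs"
    unfolding fps_eq_sum_pole_fps fps_sum_nth by (intro sum.cong refl) (auto simp: pole_fps_def)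
  finally show ?thesis .
qed

end

locale quasi_polynomial_partial_fractions = partial_fraction_expansion p L M c
  for p :: "nat \<Rightarrow> 'a::field_char_0" and L M c +
  fixes D r :: nat and d :: "nat \<Rightarrow> nat \<Rightarrow> 'a"
  assumes D_pos: "D > 0"
    and periodic: "\<And>k n. k < r \<Longrightarrow> d k (n + D) = d k n"
    and p_def: "\<And>n. p n = (\<Sum>k<r. d k n * of_nat n ^ k)"
begin

lemma order_pole_le_order_one_minus_monom:
  assumes "a \<in> poles"
  shows "order a M \<le> r * order a (1 - monom 1 D)"
proof -
  obtain P where P: "fps_of_poly ((1 - monom 1 D) ^ r) * Abs_fps p = fps_of_poly P"
    using quasi_polynomial_fps_mult_is_poly[OF periodic p_def] by blast
  have "coeff (1 - monom 1 D :: 'a poly) 0 = 1"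
    using D_pos by simp
  then have nonzero: "1 - monom 1 D \<noteq> (0 :: 'a poly)"
    by (metis coeff_0 zero_neq_one)
  then have "order a M \<le> order a ((1 - monom 1 D) ^ r)"
    using P assms by (intro order_pole_le_order) simp_all
  then show ?thesis
    by (simp add: order_power[OF nonzero])
qed

lemma pole_root_of_unity:
  assumes "a \<in> poles"
  shows "a ^ D = 1"
proof -
  have "order a M > 0"
    using assms denominator_nonzero by (simp add: order_gt_0_iff)
  then have "order a (1 - monom 1 D) > 0"
    using order_pole_le_order_one_minus_monom[OF assms] by (metis gr0I mult_0_right le_zero_eq)
  then have "poly (1 - monom 1 D) a = 0"
    by (metis order_0I less_irrefl)
  then show ?thesis
    by (simp add: poly_monom)
qed

lemma order_pole_le:
  assumes "a \<in> poles"
  shows "order a M \<le> r"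
  using order_pole_le_order_one_minus_monom[OF assms]
  by (simp add: order_one_minus_monom_root_of_unity[OF D_pos pole_root_of_unity[OF assms]])

lemma constituent_poly_eq:
  "(\<Sum>i<r. monom (d i v) i) = (\<Sum>a\<in>poles. \<Sum>l=1..order a M.
      smult (c a l / (a ^ (v + l) * fact (l - 1))) (pochhammer [:1, 1:] (l - 1)))"
    (is "?PL = ?PR")
proof (rule poly_eqI_infinite)
  have "inj (\<lambda>t. of_nat (v + D * t) :: 'a)"
    using D_pos by (auto simp: inj_def)
  then show "infinite (range (\<lambda>t. of_nat (v + D * t) :: 'a))"
    using finite_imageD by blast
next
  fix z assume "z \<in> range (\<lambda>t. of_nat (v + D * t) :: 'a)"
  then obtain t where z: "z = of_nat (v + D * t)"
    by auto
  have "d i (v + D * t) = d i v" if "i < r" for i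
    using periodic_add_mult[of "d i" D v t] periodic[OF that] by blast
  then have "poly ?PL z = p (v + D * t)"
    unfolding p_def z poly_sum by (intro sum.cong refl) (simp add: poly_monom)
  also have "\<dots> = poly ?PR z"
    unfolding nth_eq_partial_fraction_sum poly_sum
  proof (intro sum.cong refl)
    fix a l assume "a \<in> poles"
    then have "a ^ (v + D * t + l) = a ^ (v + l)"
      using pole_root_of_unity by (simp add: power_add power_mult ac_simps)
    then show "c a l * of_nat ((v + D * t + (l - 1)) choose (l - 1)) / a ^ (v + D * t + l)
        = poly (smult (c a l / (a ^ (v + l) * fact (l - 1))) (pochhammer [:1, 1:] (l - 1))) z"
      unfolding z poly_smult poly_pochhammer_X_plus_1_of_nat by simp
  qed
  finally show "poly ?PL z = poly ?PR z" .
qed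

lemma constituent_coeff_eq:
  assumes "k < r"
  shows "d k v = (\<Sum>a\<in>poles. \<Sum>l=1..order a M.
                    c a l / (a ^ (v + l) * fact (l - 1)) * of_nat (stirling l (Suc k)))"
proof -
  have "d k v = coeff (\<Sum>i<r. monom (d i v) i) k"
    using assms by (simp add: coeff_sum)
  also have "\<dots> = (\<Sum>a\<in>poles. \<Sum>l=1..order a M.
      c a l / (a ^ (v + l) * fact (l - 1)) * of_nat (stirling l (Suc k)))"
    unfolding constituent_poly_eq coeff_sum by (intro sum.cong refl) (auto simp: coeff_pochhammer_X_plus_1)
  finally show ?thesis .
qed

lemma averaged_constituent_coeff_eq:
  assumes "\<gamma> \<in> poles" and "k < r"
  shows "1 / of_nat D * (\<Sum>v<D. \<gamma> ^ v * d k v)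
       = (\<Sum>l\<le>order \<gamma> M. c \<gamma> l / (\<gamma> ^ l * fact (l - 1)) * of_nat (stirling l (Suc k)))"
proof -
  define y where "y a = (\<Sum>l=1..order a M. c a l / (a ^ l * fact (l - 1)) * of_nat (stirling l (Suc k)))"
    for a
  have "\<gamma> ^ v * d k v = (\<Sum>a\<in>poles. y a * (\<gamma> / a) ^ v)" for v
  proof -
    have "\<gamma> ^ v * d k v = (\<Sum>a\<in>poles. \<Sum>l=1..order a M.
        \<gamma> ^ v * (c a l / (a ^ (v + l) * fact (l - 1)) * of_nat (stirling l (Suc k))))"
      using constituent_coeff_eq[OF assms(2)] by (simp add: sum_distrib_left)
    also have "\<dots> = (\<Sum>a\<in>poles. y a * (\<gamma> / a) ^ v)"
      unfolding y_def sum_distrib_right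
    proof (intro sum.cong refl)
      fix a l assume "a \<in> poles"
      then have "a \<noteq> 0"
        by (rule pole_nonzero)
      then have "\<gamma> ^ v * (x / (a ^ (v + l) * F) * s) = x / (a ^ l * F) * s * (\<gamma> / a) ^ v" for x F s
        by (simp add: power_add power_divide divide_simps)
      then show "\<gamma> ^ v * (c a l / (a ^ (v + l) * fact (l - 1)) * of_nat (stirling l (Suc k)))
          = c a l / (a ^ l * fact (l - 1)) * of_nat (stirling l (Suc k)) * (\<gamma> / a) ^ v" .
    qed
    finally show ?thesis .
  qed
  then have "(\<Sum>v<D. \<gamma> ^ v * d k v) = (\<Sum>a\<in>poles. y a * (\<Sum>v<D. (\<gamma> / a) ^ v))"
    by (simp add: sum_distrib_left sum.swap[of _ "{..<D}"])
  also have "\<dots> = (\<Sum>a\<in>poles. if a = \<gamma> then y a * of_nat D else 0)"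
    using sum_power_quotient_roots_of_unity[OF pole_root_of_unity pole_root_of_unity[OF assms(1)]]
    by (intro sum.cong refl) simp
  also have "\<dots> = y \<gamma> * of_nat D"
    using assms(1) finite_poles by simp
  finally have "1 / of_nat D * (\<Sum>v<D. \<gamma> ^ v * d k v) = y \<gamma>"
    using D_pos by simp
  also have "y \<gamma> = (\<Sum>l\<in>insert 0 {1..order \<gamma> M}.
      c \<gamma> l / (\<gamma> ^ l * fact (l - 1)) * of_nat (stirling l (Suc k)))"
    unfolding y_def by (subst sum.insert) simp_all
  also have "insert 0 {1..order \<gamma> M} = {..order \<gamma> M}"
    by auto
  finally show ?thesis .
qed

end

theorem proposition3p2:
  fixes D r :: nat
    and d :: "nat \<Rightarrow> nat \<Rightarrow> complex"
    and p :: "nat \<Rightarrow> complex"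
    and L M :: "complex poly"
    and c :: "complex \<Rightarrow> nat \<Rightarrow> complex"
    and \<gamma> :: complex and m :: nat
  assumes D_pos: "D > 0" and r_pos: "r > 0"
    and periodic: "\<And>k n. k < r \<Longrightarrow> d k (n + D) = d k n"
    and lead_nonzero: "\<exists>n. d (r - 1) n \<noteq> 0"
    and p_def: "\<And>n. p n = (\<Sum>k<r. d k n * of_nat n ^ k)"
    and genfun: "Abs_fps p * fps_of_poly M = fps_of_poly L"
    and lowest_terms: "coprime L M"
    and partial_fractions: "\<And>z. poly M z \<noteq> 0 \<Longrightarrow>
        poly L z / poly M z =
        (\<Sum>a\<in>{a. poly M a = 0}. \<Sum>l=1..order a M. c a l / (a - z) ^ l)"
    and root: "poly M \<gamma> = 0"
    and m_range: "1 \<le> m" "m \<le> order \<gamma> M"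
  shows "c \<gamma> m = \<gamma> ^ m * fact (m - 1) *
           (\<Sum>l=m..order \<gamma> M. (-1) ^ (l - m) * of_nat (Stirling l m) *
              (1 / of_nat D) * (\<Sum>v<D. \<gamma> ^ v * d (l - 1) v))"
proof -
  interpret quasi_polynomial_partial_fractions p L M c D r d
    using D_pos periodic p_def genfun lowest_terms partial_fractions by unfold_locales
  define N where "N = order \<gamma> M"
  have pole: "\<gamma> \<in> poles"
    using root by simp
  have "\<gamma> \<noteq> 0"
    using pole by (rule pole_nonzero)
  have "N \<le> r"
    unfolding N_def using pole by (rule order_pole_le)
  have "1 / of_nat D * (\<Sum>v<D. \<gamma> ^ v * d (l - 1) v)
      = (\<Sum>j\<le>N. c \<gamma> j / (\<gamma> ^ j * fact (j - 1)) * of_nat (stirling j l))"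
    if "m \<le> l" and "l \<le> N" for l
  proof -
    from that m_range \<open>N \<le> r\<close> obtain k where "l = Suc k" and "k < r"
      by (cases l) auto
    then show ?thesis
      using averaged_constituent_coeff_eq[OF pole \<open>k < r\<close>] by (simp add: N_def)
  qed
  then have "(\<Sum>l=m..N. (-1) ^ (l - m) * of_nat (Stirling l m) *
      (1 / of_nat D * (\<Sum>v<D. \<gamma> ^ v * d (l - 1) v))) = c \<gamma> m / (\<gamma> ^ m * fact (m - 1))"
    using m_range by (intro Stirling_inversion) (simp_all add: N_def)
  then show ?thesis
    using \<open>\<gamma> \<noteq> 0\<close> unfolding N_def mult.assoc by simp
qed

end
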